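(* Let $T>0$, $\xi\in C^{1+\beta}([0,T])$ with $\beta>1/2$, and $f\in C^{1/2}([0,T])$. Let $K(t,s)=\frac{\xi(t)-\xi(s)}{t-s}\frac{e^{-(\xi(t)-\xi(s))^2/(4(t-s))}}{(t-s)^{1/2}}$ for $0\le s<t\le T$, and let $G$ be the function associated with $K$ as in the context. Then the function $v(t)=\int_0^tG(t,s)f(s)\,ds$ belongs to $C^{1/2}([0,T])$.
   Context: Define $H_1(t,s)=K(t,s)\mathbf 1_{(0,t)}(s)$ for $(t,s)\in[0,T]^2$ and recursively $H_n(t,s)=\int_0^TH_{n-1}(t,z)H_1(z,s)\,dz$ for $n\ge2$; then $G(t,s)=\sum_{n\ge2}H_n(t,s)$, the series converging uniformly on $[0,T]\times[0,T]$. Equivalently, $K+G$ is the resolvent kernel of the Volterra operator $x\mapsto x(t)-\int_0^tK(t,s)x(s)ds$, i.e. $x(t)=L(x)(t)+\int_0^t(K(t,s)+G(t,s))L(x)(s)ds$. *)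

theory Defs
  imports "HOL-Analysis.Analysis"
begin

text \<open>On the compact interval [0,T] a finite Hoelder seminorm implies boundedness
  and continuity, so this is membership in C^alpha([0,T]).\<close>
definition hoelder_on :: "real \<Rightarrow> real set \<Rightarrow> (real \<Rightarrow> real) \<Rightarrow> bool" where
  "hoelder_on \<alpha> S f \<longleftrightarrow>
     (\<exists>C. \<forall>x\<in>S. \<forall>y\<in>S. \<bar>f x - f y\<bar> \<le> C * \<bar>x - y\<bar> powr \<alpha>)"

definition C1_hoelder_on :: "real \<Rightarrow> real set \<Rightarrow> (real \<Rightarrow> real) \<Rightarrow> bool" where
  "C1_hoelder_on \<beta> S f \<longleftrightarrow>
     (\<exists>f'. (\<forall>t\<in>S. (f has_real_derivative f' t) (at t within S)) \<and> hoelder_on \<beta> S f')"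

text \<open>The kernel K(t,s), for 0 <= s < t (set to 0 otherwise; only used for s < t).\<close>
definition kernK :: "(real \<Rightarrow> real) \<Rightarrow> real \<Rightarrow> real \<Rightarrow> real" where
  "kernK \<xi> t s = (if s < t then
      (\<xi> t - \<xi> s) / (t - s) * exp (- (((\<xi> t - \<xi> s)^2) / (4 * (t - s)))) / sqrt (t - s)
    else 0)"

definition H1 :: "(real \<Rightarrow> real) \<Rightarrow> real \<Rightarrow> real \<Rightarrow> real" where
  "H1 \<xi> t s = kernK \<xi> t s * indicator {0<..<t} s"

text \<open>Hsh \<xi> T n = H_(n+1).\<close>
primrec Hsh :: "(real \<Rightarrow> real) \<Rightarrow> real \<Rightarrow> nat \<Rightarrow> real \<Rightarrow> real \<Rightarrow> real" where
  "Hsh \<xi> T 0 t s = H1 \<xi> t s"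
| "Hsh \<xi> T (Suc n) t s = (LINT z:{0..T}|lborel. Hsh \<xi> T n t z * H1 \<xi> z s)"

text \<open>G(t,s) = sum_{n>=2} H_n(t,s).\<close>
definition Gres :: "(real \<Rightarrow> real) \<Rightarrow> real \<Rightarrow> real \<Rightarrow> real \<Rightarrow> real" where
  "Gres \<xi> T t s = (\<Sum>n. Hsh \<xi> T (Suc n) t s)"

end

(*
  Only two consequences of the hypotheses are used: \<xi> is Lipschitz on [0,T] and f is bounded.
  Then |K(t,s)| \<le> M/\<surd>(t-s), and for a suitable \<lambda> the weighted majorant M e^{-\<lambda>(z-s)}/\<surd>(z-s)
  integrates to at most 1/2 both in z and in s. Consequently |H_{n+1}(t,s)| \<le> C 2^{-n}, so the series
  for G converges uniformly, and the weighted L1 distance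
  \<integral> |H_n(t,s) - H_n(t',s)| e^{\<lambda>s} ds is at least halved from n to n+1. Summing, the L1 distance between
  G(t,\<cdot>) and G(t',\<cdot>) is at most e^{\<lambda>T} times that between K(t,\<cdot>) and K(t',\<cdot>), which is
  O(\<surd>(t-t')) by a direct estimate of the three factors of K.
*)

theory Submission
  imports Defs
begin

section \<open>Elementary integrals and inequalities\<close>

lemma nn_integral_Ioo_fundamental:
  fixes a b :: real
  assumes "a \<le> b" "continuous_on {a..b} F"
    and "\<And>x. a < x \<Longrightarrow> x < b \<Longrightarrow> (F has_real_derivative f x) (at x)"
    and "\<And>x. a < x \<Longrightarrow> x < b \<Longrightarrow> 0 \<le> f x"
  shows "(\<integral>\<^sup>+x. indicator {a<..<b} x * ennreal (f x) \<partial>lborel) = ennreal (F b - F a)"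
proof -
  have "(f has_integral F b - F a) {a..b}"
    by (rule fundamental_theorem_of_calculus_interior[OF assms(1,2)])
       (auto simp: has_real_derivative_iff_has_vector_derivative[symmetric] intro: assms(3))
  then have "(f has_integral F b - F a) {a<..<b}"
    by (simp add: has_integral_Icc_iff_Ioo)
  with assms(4) have "(\<integral>\<^sup>+x. ennreal (indicator {a<..<b} x * f x) \<partial>lborel) = ennreal (F b - F a)"
    by (intro nn_integral_has_integral_lebesgue) auto
  moreover have "(\<lambda>x. ennreal (indicator {a<..<b} x * f x)) = (\<lambda>x. indicator {a<..<b} x * ennreal (f x))"
    by (auto simp: indicator_def fun_eq_iff)
  ultimately show ?thesis
    by simp
qed

lemma nn_integral_Ioo_inv_sqrt_left:
  fixes a b c :: real
  assumes "0 \<le> c" "a \<le> b"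
  shows "(\<integral>\<^sup>+x. indicator {a<..<b} x * ennreal (c / sqrt (x - a)) \<partial>lborel) = ennreal (2 * c * sqrt (b - a))"
proof -
  have "((\<lambda>x. 2 * c * sqrt (x - a)) has_real_derivative c / sqrt (x - a)) (at x)" if "a < x" for x
    using that by (auto intro!: derivative_eq_intros simp: field_simps)
  then have "(\<integral>\<^sup>+x. indicator {a<..<b} x * ennreal (c / sqrt (x - a)) \<partial>lborel)
      = ennreal (2 * c * sqrt (b - a) - 2 * c * sqrt (a - a))"
    using assms by (intro nn_integral_Ioo_fundamental) (auto intro!: continuous_intros)
  then show ?thesis
    by simp
qed

lemma nn_integral_Ioo_inv_sqrt_right:
  fixes a b c :: real
  assumes "0 \<le> c" "a \<le> b"
  shows "(\<integral>\<^sup>+x. indicator {a<..<b} x * ennreal (c / sqrt (b - x)) \<partial>lborel) = ennreal (2 * c * sqrt (b - a))"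
proof -
  have "((\<lambda>x. - 2 * c * sqrt (b - x)) has_real_derivative c / sqrt (b - x)) (at x)" if "x < b" for x
    using that by (auto intro!: derivative_eq_intros simp: field_simps)
  then have "(\<integral>\<^sup>+x. indicator {a<..<b} x * ennreal (c / sqrt (b - x)) \<partial>lborel)
      = ennreal (- 2 * c * sqrt (b - b) - - 2 * c * sqrt (b - a))"
    using assms by (intro nn_integral_Ioo_fundamental) (auto intro!: continuous_intros)
  then show ?thesis
    by simp
qed

lemma nn_integral_Ioo_inv_sqrt_cube_le:
  fixes a t t' :: real
  assumes "a \<le> t'" "t' < t"
  shows "(\<integral>\<^sup>+x. indicator {a<..<t'} x * ennreal (1 / ((t - x) * sqrt (t - x))) \<partial>lborel) \<le> ennreal (2 / sqrt (t - t'))"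
proof -
  have "((\<lambda>x. 2 / sqrt (t - x)) has_real_derivative 1 / ((t - x) * sqrt (t - x))) (at x)" if "x < t" for x
    using that by (auto intro!: derivative_eq_intros simp: field_simps power2_eq_square)
  then have "(\<integral>\<^sup>+x. indicator {a<..<t'} x * ennreal (1 / ((t - x) * sqrt (t - x))) \<partial>lborel)
      = ennreal (2 / sqrt (t - t') - 2 / sqrt (t - a))"
    using assms by (intro nn_integral_Ioo_fundamental) (auto intro!: continuous_intros)
  then show ?thesis
    using assms by (auto intro: ennreal_leI)
qed

lemma nn_integral_Ioo_inv_sqrt_diff_le:
  fixes a t t' :: real
  assumes "a \<le> t'" "t' < t"
  shows "(\<integral>\<^sup>+x. indicator {a<..<t'} x * ennreal (1 / sqrt (t' - x) - 1 / sqrt (t - x)) \<partial>lborel) \<le> ennreal (2 * sqrt (t - t'))"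
proof -
  have "((\<lambda>x. 2 * sqrt (t - x) - 2 * sqrt (t' - x)) has_real_derivative 1 / sqrt (t' - x) - 1 / sqrt (t - x)) (at x)"
    if "x < t'" for x
    using that assms by (auto intro!: derivative_eq_intros simp: field_simps)
  moreover have "0 \<le> 1 / sqrt (t' - x) - 1 / sqrt (t - x)" if "x < t'" for x
    using that assms by (auto simp: frac_le)
  ultimately have "(\<integral>\<^sup>+x. indicator {a<..<t'} x * ennreal (1 / sqrt (t' - x) - 1 / sqrt (t - x)) \<partial>lborel)
      = ennreal ((2 * sqrt (t - t') - 2 * sqrt (t' - t')) - (2 * sqrt (t - a) - 2 * sqrt (t' - a)))"
    using assms by (intro nn_integral_Ioo_fundamental) (auto intro!: continuous_intros)
  moreover have "sqrt (t' - a) \<le> sqrt (t - a)"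
    using assms by simp
  ultimately show ?thesis
    using assms by (auto intro!: ennreal_leI)
qed

lemma nn_integral_cmult_le:
  assumes "g \<in> borel_measurable M" "integral\<^sup>N M g \<le> ennreal b" "0 \<le> c" "0 \<le> b"
  shows "(\<integral>\<^sup>+ x. ennreal c * g x \<partial>M) \<le> ennreal (c * b)"
proof -
  have "(\<integral>\<^sup>+ x. ennreal c * g x \<partial>M) = ennreal c * integral\<^sup>N M g"
    using assms(1) by (rule nn_integral_cmult)
  also have "\<dots> \<le> ennreal c * ennreal b"
    using assms(2) by (rule mult_left_mono) simp
  finally show ?thesis
    using assms(3,4) by (simp add: ennreal_mult)
qed

lemma abs_integral_le_nn_integral:
  fixes f :: "'a \<Rightarrow> real"
  shows "ennreal \<bar>integral\<^sup>L M f\<bar> \<le> (\<integral>\<^sup>+ x. ennreal \<bar>f x\<bar> \<partial>M)"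
proof (cases "integrable M f")
  case True
  then show ?thesis using integral_norm_bound_ennreal[OF True] by simp
qed (simp add: not_integrable_integral_eq)

lemma inv_sqrt_mult_le:
  fixes p q d :: real
  assumes "0 < p" "0 < q" "p + q = d"
  shows "1 / (sqrt p * sqrt q) \<le> sqrt 2 / sqrt d * (1 / sqrt q + 1 / sqrt p)"
proof -
  have d: "0 < d" using assms by simp
  have "sqrt (d/2) \<le> sqrt p + sqrt q"
  proof (cases "p \<ge> d / 2")
    case True
    then have "sqrt (d/2) \<le> sqrt p" by simp
    then show ?thesis using assms by (intro add_increasing2) auto
  next
    case False
    then have "sqrt (d/2) \<le> sqrt q" using assms by simp
    then show ?thesis using assms by (intro add_increasing) auto
  qed
  then have "sqrt 2 / sqrt d * sqrt (d/2) \<le> sqrt 2 / sqrt d * (sqrt p + sqrt q)"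
    by (rule mult_left_mono) (use d in simp)
  moreover have "sqrt 2 / sqrt d * sqrt (d/2) = 1"
    using d by (simp add: real_sqrt_divide)
  ultimately have "1 \<le> sqrt 2 / sqrt d * (sqrt p + sqrt q)"
    by simp
  then have "1 / (sqrt p * sqrt q) \<le> sqrt 2 / sqrt d * (sqrt p + sqrt q) / (sqrt p * sqrt q)"
    using assms by (intro divide_right_mono) auto
  also have "\<dots> = sqrt 2 / sqrt d * ((sqrt p + sqrt q) / (sqrt p * sqrt q))"
    by simp
  also have "(sqrt p + sqrt q) / (sqrt p * sqrt q) = 1 / sqrt q + 1 / sqrt p"
    using assms by (simp add: add_divide_distrib)
  finally show ?thesis .
qed

lemma abs_exp_minus_diff_le:
  fixes x y :: real
  assumes "0 \<le> x" "0 \<le> y"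
  shows "\<bar>exp (- x) - exp (- y)\<bar> \<le> \<bar>x - y\<bar>"
proof -
  have *: "exp (- a) - exp (- b) \<le> b - a" if "0 \<le> a" "a \<le> b" for a b :: real
  proof -
    have "exp (- a) - exp (- b) = exp (- a) * (1 - exp (- (b - a)))"
      by (simp add: algebra_simps exp_add[symmetric])
    also have "\<dots> \<le> 1 - exp (- (b - a))"
      using that by (intro mult_left_le_one_le) auto
    also have "\<dots> \<le> b - a"
      using exp_ge_add_one_self[of "- (b - a)"] by linarith
    finally show ?thesis .
  qed
  show ?thesis
    using *[of x y] *[of y x] assms by (cases "x \<le> y") auto
qed

lemma abs_heat_exponent_diff_le:
  fixes M u u' d d' :: real
  assumes u: "0 < u'" "u' < u"
    and d: "\<bar>d\<bar> \<le> M * u" and d': "\<bar>d'\<bar> \<le> M * u'" and dd: "\<bar>d - d'\<bar> \<le> M * (u - u')"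
    and M: "0 \<le> M"
  shows "\<bar>d\<^sup>2 / (4 * u) - d'\<^sup>2 / (4 * u')\<bar> \<le> M\<^sup>2 * (u - u')"
proof -
  define h where "h = u - u'"
  have u0: "0 < u" and h: "0 < h" using u by (auto simp: h_def)
  have "d\<^sup>2 / (4 * u) - d'\<^sup>2 / (4 * u) = (d - d') * (d + d') / (4 * u)"
    by (simp add: power2_eq_square diff_divide_distrib[symmetric] algebra_simps)
  moreover have "d'\<^sup>2 / (4 * u) - d'\<^sup>2 / (4 * u') = - (d'\<^sup>2 * (h / (4 * u * u')))"
    using u u0 by (simp add: h_def field_simps)
  ultimately have split: "d\<^sup>2 / (4 * u) - d'\<^sup>2 / (4 * u') = (d - d') * (d + d') / (4 * u) - d'\<^sup>2 * (h / (4 * u * u'))"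
    by linarith
  have "M * u' \<le> M * u" using u M by (intro mult_left_mono) auto
  then have "\<bar>d + d'\<bar> \<le> 2 * M * u" using d d' by linarith
  then have "\<bar>(d - d') * (d + d')\<bar> \<le> M * h * (2 * M * u)"
    unfolding abs_mult using dd M h by (intro mult_mono) (auto simp: h_def)
  also have "\<dots> = M\<^sup>2 * h / 2 * (4 * u)"
    by (simp add: power2_eq_square)
  finally have "\<bar>(d - d') * (d + d')\<bar> / (4 * u) \<le> M\<^sup>2 * h / 2"
    using u0 by (simp only: pos_divide_le_eq)
  then have b1: "\<bar>(d - d') * (d + d') / (4 * u)\<bar> \<le> M\<^sup>2 * h / 2"
    using u0 by (simp add: abs_divide)
  have "d'\<^sup>2 \<le> (M * u')\<^sup>2"
    using d' abs_le_square_iff[of d' "M * u'"] u M by auto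
  then have "d'\<^sup>2 * (h / (4 * u * u')) \<le> (M * u')\<^sup>2 * (h / (4 * u * u'))"
    using u h by (intro mult_right_mono) auto
  also have "\<dots> = M\<^sup>2 * h / 4 * (u' / u)"
    using u by (simp add: power2_eq_square)
  also have "\<dots> \<le> M\<^sup>2 * h / 4"
    using u h by (intro mult_left_le) auto
  finally have b2: "\<bar>d'\<^sup>2 * (h / (4 * u * u'))\<bar> \<le> M\<^sup>2 * h / 4"
    using u h by simp
  show ?thesis
    unfolding split h_def[symmetric]
    using abs_triangle_ineq4[of "(d - d') * (d + d') / (4 * u)" "d'\<^sup>2 * (h / (4 * u * u'))"] b1 b2
      mult_nonneg_nonneg[OF zero_le_power2[of M] less_imp_le[OF h]]
    by linarith
qed

lemma abs_divide_diff_le: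
  fixes M u u' d d' :: real
  assumes u: "0 < u'" "u' < u" and d': "\<bar>d'\<bar> \<le> M * u'" and dd: "\<bar>d - d'\<bar> \<le> M * (u - u')"
  shows "\<bar>d / u - d' / u'\<bar> \<le> 2 * M * (u - u') / u"
proof -
  define h where "h = u - u'"
  have u0: "0 < u" and h: "0 < h" using u by (auto simp: h_def)
  have "d / u - d' / u' = (d - d') / u - d' * h / (u * u')"
    using u u0 by (simp add: h_def field_simps)
  also have "\<bar>\<dots>\<bar> \<le> \<bar>(d - d') / u\<bar> + \<bar>d' * h / (u * u')\<bar>"
    by (rule abs_triangle_ineq4)
  also have "\<bar>(d - d') / u\<bar> \<le> M * h / u"
    using dd u0 by (simp add: abs_divide divide_right_mono h_def)
  also have "\<bar>d' * h / (u * u')\<bar> = \<bar>d'\<bar> * (h / (u * u'))"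
    using h u by (simp add: abs_mult)
  also have "\<dots> \<le> M * u' * (h / (u * u'))"
    using d' h u by (intro mult_right_mono) auto
  also have "M * u' * (h / (u * u')) = M * h / u"
    using u by simp
  finally show ?thesis
    by (simp add: h_def)
qed

lemma abs_heat_kernel_diff_le:
  fixes M u u' d d' :: real
  assumes u: "0 < u'" "u' < u"
    and d: "\<bar>d\<bar> \<le> M * u" and d': "\<bar>d'\<bar> \<le> M * u'" and dd: "\<bar>d - d'\<bar> \<le> M * (u - u')"
    and M: "0 \<le> M"
  shows "\<bar>d / u * exp (- (d\<^sup>2 / (4 * u))) / sqrt u - d' / u' * exp (- (d'\<^sup>2 / (4 * u'))) / sqrt u'\<bar>
     \<le> 2 * M * (u - u') * (1 / (u * sqrt u)) + M ^ 3 * (u - u') / sqrt u + M * (1 / sqrt u' - 1 / sqrt u)"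
proof -
  define h where "h = u - u'"
  define q where "q = d / u"
  define q' where "q' = d' / u'"
  define E where "E = exp (- (d\<^sup>2 / (4 * u)))"
  define E' where "E' = exp (- (d'\<^sup>2 / (4 * u')))"
  define c where "c = 1 / sqrt u"
  define c' where "c' = 1 / sqrt u'"
  have u0: "0 < u" and h: "0 < h" using u by (auto simp: h_def)
  have q': "\<bar>q'\<bar> \<le> M" using d' u by (simp add: q'_def abs_divide divide_le_eq)
  have qq: "\<bar>q - q'\<bar> \<le> 2 * M * h / u"
    unfolding q_def q'_def h_def using u d' dd by (rule abs_divide_diff_le)
  have E: "0 \<le> E" "E \<le> 1" "0 \<le> E'" "E' \<le> 1"
    using u u0 by (auto simp: E_def E'_def)
  have EE: "\<bar>E - E'\<bar> \<le> M\<^sup>2 * h"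
  proof -
    have "\<bar>E - E'\<bar> \<le> \<bar>d\<^sup>2 / (4 * u) - d'\<^sup>2 / (4 * u')\<bar>"
      unfolding E_def E'_def using u u0 by (intro abs_exp_minus_diff_le) auto
    also have "\<dots> \<le> M\<^sup>2 * h"
      unfolding h_def by (rule abs_heat_exponent_diff_le[OF assms])
    finally show ?thesis .
  qed
  have c: "0 < c" "c \<le> c'"
    using u u0 by (auto simp: c_def c'_def intro!: divide_left_mono)
  have "d / u * exp (- (d\<^sup>2 / (4 * u))) / sqrt u - d' / u' * exp (- (d'\<^sup>2 / (4 * u'))) / sqrt u'
      = q * E * c - q' * E' * c'"
    by (simp add: q_def q'_def E_def E'_def c_def c'_def)
  also have "\<dots> = (q - q') * E * c + q' * (E - E') * c + q' * E' * (c - c')"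
    by (simp add: algebra_simps)
  also have "\<bar>\<dots>\<bar> \<le> \<bar>(q - q') * E * c\<bar> + \<bar>q' * (E - E') * c\<bar> + \<bar>q' * E' * (c - c')\<bar>"
    by (meson abs_triangle_ineq add_mono order_trans order_refl)
  also have "\<dots> \<le> 2 * M * h / u * 1 * c + M * (M\<^sup>2 * h) * c + M * 1 * (c' - c)"
    unfolding abs_mult using qq q' E EE c M by (intro add_mono mult_mono) auto
  also have "\<dots> = 2 * M * h * (1 / (u * sqrt u)) + M ^ 3 * h / sqrt u + M * (1 / sqrt u' - 1 / sqrt u)"
    by (simp add: c_def c'_def power3_eq_cube power2_eq_square)
  finally show ?thesis
    unfolding h_def .
qed

lemma mult_le_sqrt_mult:
  fixes h t T :: real
  assumes "0 \<le> h" "h \<le> t" "t \<le> T"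
  shows "h * sqrt t \<le> T * sqrt h"
proof -
  have "h * sqrt t = sqrt h * (sqrt h * sqrt t)"
    using assms by simp
  also have "\<dots> \<le> sqrt h * (sqrt T * sqrt T)"
    using assms by (intro mult_left_mono mult_mono) auto
  finally show ?thesis
    using assms by (simp add: mult.commute)
qed

section \<open>Hoelder functions on intervals\<close>

lemma hoelder_on_cong:
  assumes "\<And>x. x \<in> S \<Longrightarrow> f x = g x"
  shows "hoelder_on \<alpha> S f \<longleftrightarrow> hoelder_on \<alpha> S g"
  using assms by (simp add: hoelder_on_def)

lemma hoelder_on_halfI:
  assumes "\<And>x y. x \<in> S \<Longrightarrow> y \<in> S \<Longrightarrow> y < x \<Longrightarrow> \<bar>g x - g y\<bar> \<le> K * sqrt (x - y)"
  shows "hoelder_on (1/2) S g"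
  unfolding hoelder_on_def
proof (intro exI[of _ K] ballI)
  fix x y
  assume "x \<in> S" "y \<in> S"
  then show "\<bar>g x - g y\<bar> \<le> K * \<bar>x - y\<bar> powr (1/2)"
    using assms[of x y] assms[of y x]
    by (cases x y rule: linorder_cases) (auto simp: powr_half_sqrt abs_minus_commute)
qed

lemma hoelder_on_imp_continuous_on:
  assumes "hoelder_on \<alpha> S f" "0 < \<alpha>"
  shows "continuous_on S f"
proof -
  obtain C where C: "\<And>x y. x \<in> S \<Longrightarrow> y \<in> S \<Longrightarrow> \<bar>f x - f y\<bar> \<le> C * \<bar>x - y\<bar> powr \<alpha>"
    using assms(1) unfolding hoelder_on_def by blast
  show ?thesis
    unfolding continuous_on_iff
  proof (intro ballI allI impI)
    fix x e :: real
    assume x: "x \<in> S" and e: "0 < e"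
    define C' where "C' = \<bar>C\<bar> + 1"
    have C': "0 < C'" by (simp add: C'_def)
    define d where "d = (e / C') powr (1 / \<alpha>)"
    have "dist (f x') (f x) < e" if x': "x' \<in> S" "dist x' x < d" for x'
    proof -
      have "\<bar>f x' - f x\<bar> \<le> C * \<bar>x' - x\<bar> powr \<alpha>"
        using C x x' by blast
      also have "\<dots> \<le> C' * \<bar>x' - x\<bar> powr \<alpha>"
        by (intro mult_right_mono) (auto simp: C'_def)
      also have "\<dots> < C' * d powr \<alpha>"
        using x' C' assms(2) by (intro mult_strict_left_mono powr_less_mono2) (auto simp: dist_real_def)
      also have "C' * d powr \<alpha> = e"
        using e C' assms(2) by (simp add: d_def powr_powr)
      finally show ?thesis
        by (simp add: dist_real_def)
    qed
    moreover have "0 < d"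
      using e C' by (simp add: d_def)
    ultimately show "\<exists>d>0. \<forall>x'\<in>S. dist x' x < d \<longrightarrow> dist (f x') (f x) < e"
      by blast
  qed
qed

lemma C1_hoelder_on_lipschitz:
  assumes "C1_hoelder_on \<beta> {a..b} \<xi>" "0 \<le> \<beta>" "a \<le> b"
  obtains M where "0 < M" "\<And>x y. x \<in> {a..b} \<Longrightarrow> y \<in> {a..b} \<Longrightarrow> \<bar>\<xi> x - \<xi> y\<bar> \<le> M * \<bar>x - y\<bar>"
proof -
  obtain \<xi>' C where deriv: "\<And>t. t \<in> {a..b} \<Longrightarrow> (\<xi> has_real_derivative \<xi>' t) (at t within {a..b})"
    and C: "\<And>x y. x \<in> {a..b} \<Longrightarrow> y \<in> {a..b} \<Longrightarrow> \<bar>\<xi>' x - \<xi>' y\<bar> \<le> C * \<bar>x - y\<bar> powr \<beta>"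
    using assms(1) unfolding C1_hoelder_on_def hoelder_on_def by blast
  define M where "M = \<bar>\<xi>' a\<bar> + \<bar>C\<bar> * (b - a) powr \<beta> + 1"
  have "\<bar>\<xi>' x\<bar> \<le> M" if x: "x \<in> {a..b}" for x
  proof -
    have "\<bar>\<xi>' x - \<xi>' a\<bar> \<le> C * \<bar>x - a\<bar> powr \<beta>"
      using C[OF x, of a] assms(3) by simp
    also have "\<dots> \<le> \<bar>C\<bar> * \<bar>x - a\<bar> powr \<beta>"
      by (intro mult_right_mono) auto
    also have "\<dots> \<le> \<bar>C\<bar> * (b - a) powr \<beta>"
      using x assms(2) by (intro mult_left_mono powr_mono2) auto
    finally show ?thesis
      unfolding M_def by linarith
  qed
  then have "\<bar>\<xi> x - \<xi> y\<bar> \<le> M * \<bar>x - y\<bar>" if "x \<in> {a..b}" "y \<in> {a..b}" for x y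
    using field_differentiable_bound[of "{a..b}" \<xi> \<xi>' M x y] deriv that by auto
  moreover have "0 < M"
    unfolding M_def by (simp add: add_nonneg_pos)
  ultimately show ?thesis
    using that by blast
qed

lemma lipschitz_extension_clamp:
  fixes g :: "real \<Rightarrow> real"
  assumes "a \<le> b" "0 \<le> M" "\<And>x y. x \<in> {a..b} \<Longrightarrow> y \<in> {a..b} \<Longrightarrow> \<bar>g x - g y\<bar> \<le> M * \<bar>x - y\<bar>"
  shows "\<bar>g (max a (min b x)) - g (max a (min b y))\<bar> \<le> M * \<bar>x - y\<bar>"
proof -
  have "\<bar>g (max a (min b x)) - g (max a (min b y))\<bar> \<le> M * \<bar>max a (min b x) - max a (min b y)\<bar>"
    using assms(1) by (intro assms(3)) auto
  also have "\<dots> \<le> M * \<bar>x - y\<bar>"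
    using assms(2) by (intro mult_left_mono) (auto simp: max_def min_def abs_if)
  finally show ?thesis .
qed

lemma hoelder_on_bounded_extension:
  assumes "hoelder_on \<alpha> {a..b} f" "0 < \<alpha>" "a \<le> b"
  obtains g :: "real \<Rightarrow> real" and F where "g \<in> borel_measurable borel" "\<And>x. \<bar>g x\<bar> \<le> F"
    "\<And>x. x \<in> {a..b} \<Longrightarrow> g x = f x"
proof -
  define g where "g x = f (max a (min b x))" for x
  have cont: "continuous_on {a..b} f"
    by (rule hoelder_on_imp_continuous_on[OF assms(1,2)])
  then have "continuous_on UNIV g"
    unfolding g_def by (rule continuous_on_compose2) (use assms(3) in \<open>auto intro!: continuous_intros\<close>)
  then have "g \<in> borel_measurable borel"
    by (rule borel_measurable_continuous_onI)
  moreover obtain F where "\<And>y. y \<in> f ` {a..b} \<Longrightarrow> \<bar>y\<bar> \<le> F"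
    using compact_imp_bounded[OF compact_continuous_image[OF cont compact_Icc]] unfolding bounded_real by blast
  then have "\<bar>g x\<bar> \<le> F" for x
    using assms(3) by (auto simp: g_def)
  moreover have "g x = f x" if "x \<in> {a..b}" for x
    using that by (simp add: g_def)
  ultimately show ?thesis
    using that by blast
qed

section \<open>The iterated kernels\<close>

declare Hsh.simps(2)[simp del]

lemma H1_eq_0: "\<not> (0 < s \<and> s < z) \<Longrightarrow> H1 \<xi> z s = 0"
  by (auto simp: H1_def)

lemma Hsh_eq_0: "\<not> (0 < s \<and> s < t) \<Longrightarrow> Hsh \<xi> T n t s = 0"
proof (induction n arbitrary: s)
  case 0
  then show ?case by (simp add: H1_eq_0)
next
  case (Suc n)
  have "(\<lambda>z. Hsh \<xi> T n t z * H1 \<xi> z s) = (\<lambda>z. 0)"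
  proof
    show "Hsh \<xi> T n t z * H1 \<xi> z s = 0" for z
      using Suc by (cases "0 < s \<and> s < z") (auto simp: H1_eq_0)
  qed
  then show ?case
    by (simp add: Hsh.simps)
qed

lemma Gres_eq_0: "\<not> (0 < s \<and> s < t) \<Longrightarrow> Gres \<xi> T t s = 0"
  by (simp add: Gres_def Hsh_eq_0)

lemma set_integral_Gres_mult_eq:
  "(LINT s:{0..t}|lborel. Gres \<xi> T t s * f s) = (\<integral>s. Gres \<xi> T t s * f s \<partial>lborel)"
  unfolding set_lebesgue_integral_def
proof (intro Bochner_Integration.integral_cong)
  show "indicator {0..t} s *\<^sub>R (Gres \<xi> T t s * f s) = Gres \<xi> T t s * f s" for s
    by (cases "s \<in> {0..t}") (auto intro!: Gres_eq_0)
qed simp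

lemma H1_cong:
  assumes "\<And>x. x \<in> {0..T} \<Longrightarrow> \<xi>1 x = \<xi>2 x" "z \<in> {0..T}"
  shows "H1 \<xi>1 z s = H1 \<xi>2 z s"
  using assms by (cases "0 < s \<and> s < z") (auto simp: H1_def kernK_def)

lemma Hsh_cong:
  assumes "\<And>x. x \<in> {0..T} \<Longrightarrow> \<xi>1 x = \<xi>2 x" "t \<in> {0..T}"
  shows "Hsh \<xi>1 T n t s = Hsh \<xi>2 T n t s"
proof (induction n arbitrary: s)
  case 0
  then show ?case using H1_cong[OF assms] by simp
next
  case (Suc n)
  show ?case
    unfolding Hsh.simps by (rule set_lebesgue_integral_cong) (use Suc.IH H1_cong[OF assms(1)] in auto)
qed

lemma Gres_cong:
  assumes "\<And>x. x \<in> {0..T} \<Longrightarrow> \<xi>1 x = \<xi>2 x" "t \<in> {0..T}"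
  shows "Gres \<xi>1 T t s = Gres \<xi>2 T t s"
  unfolding Gres_def using Hsh_cong[OF assms] by simp

section \<open>Estimates for a Lipschitz \<xi>\<close>

locale lipschitz_kernel =
  fixes \<xi> :: "real \<Rightarrow> real" and T M :: real
  assumes T_pos: "0 < T" and M_pos: "0 < M"
    and lipschitz: "\<And>x y. \<bar>\<xi> x - \<xi> y\<bar> \<le> M * \<bar>x - y\<bar>"
begin

lemma borel_measurable_xi[measurable]: "\<xi> \<in> borel_measurable borel"
  using lipschitz M_pos
  by (intro borel_measurable_continuous_onI lipschitz_on_continuous_on[where L=M])
     (auto simp: lipschitz_on_def dist_real_def)

lemma H1_measurable[measurable]: "(\<lambda>(z, s). H1 \<xi> z s) \<in> borel_measurable (lborel \<Otimes>\<^sub>M lborel)"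
  unfolding H1_def kernK_def indicator_def greaterThanLessThan_iff by measurable

lemma Hsh_measurable[measurable]: "Hsh \<xi> T n t \<in> borel_measurable lborel"
proof (induction n)
  case 0
  show ?case
    unfolding Hsh.simps H1_def kernK_def indicator_def greaterThanLessThan_iff by measurable
next
  case (Suc n)
  note Suc[measurable]
  have "(\<lambda>x. Hsh \<xi> T n t (snd x)) \<in> borel_measurable (lborel \<Otimes>\<^sub>M lborel)"
    by measurable
  then show ?case
    unfolding Hsh.simps set_lebesgue_integral_def by measurable
qed

definition Kmaj :: "real \<Rightarrow> real \<Rightarrow> real" where
  "Kmaj z s = (if 0 < s \<and> s < z then M / sqrt (z - s) else 0)"

lemma Kmaj_nonneg: "0 \<le> Kmaj z s"
  using M_pos by (auto simp: Kmaj_def)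

lemma Kmaj_measurable[measurable]: "(\<lambda>(z, s). Kmaj z s) \<in> borel_measurable (lborel \<Otimes>\<^sub>M lborel)"
  unfolding Kmaj_def by measurable

lemma abs_H1_le_Kmaj: "\<bar>H1 \<xi> z s\<bar> \<le> Kmaj z s"
proof (cases "0 < s \<and> s < z")
  case True
  have "\<bar>(\<xi> z - \<xi> s) / (z - s)\<bar> \<le> M"
    using lipschitz[of z s] True by (simp add: abs_divide divide_le_eq)
  moreover have "exp (- ((\<xi> z - \<xi> s)\<^sup>2 / (4 * (z - s)))) \<le> 1"
    using True by simp
  ultimately have "\<bar>(\<xi> z - \<xi> s) / (z - s)\<bar> * exp (- ((\<xi> z - \<xi> s)\<^sup>2 / (4 * (z - s)))) / sqrt (z - s)
      \<le> M * 1 / sqrt (z - s)"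
    using True M_pos by (intro divide_right_mono mult_mono) auto
  then show ?thesis
    using True by (simp add: H1_def kernK_def Kmaj_def abs_mult abs_divide)
qed (use Kmaj_nonneg in \<open>simp add: H1_eq_0\<close>)

lemma nn_integral_Kmaj_Kmaj_le: "(\<integral>\<^sup>+ z. ennreal (Kmaj t z * Kmaj z s) \<partial>lborel) \<le> ennreal (6 * M\<^sup>2)"
proof (cases "s < t")
  case False
  then have "(\<lambda>z. ennreal (Kmaj t z * Kmaj z s)) = (\<lambda>z. 0)"
    by (auto simp: Kmaj_def)
  then show ?thesis
    by simp
next
  case True
  define c where "c = M\<^sup>2 * sqrt 2 / sqrt (t - s)"
  have c0: "0 \<le> c" using True by (simp add: c_def)
  have pw: "ennreal (Kmaj t z * Kmaj z s)
      \<le> indicator {s<..<t} z * ennreal (c / sqrt (z - s)) + indicator {s<..<t} z * ennreal (c / sqrt (t - z))" for z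
  proof (cases "0 < s \<and> s < z \<and> z < t")
    case True
    have "Kmaj t z * Kmaj z s = M\<^sup>2 * (1 / (sqrt (t - z) * sqrt (z - s)))"
      using True by (simp add: Kmaj_def power2_eq_square)
    also have "\<dots> \<le> M\<^sup>2 * (sqrt 2 / sqrt (t - s) * (1 / sqrt (z - s) + 1 / sqrt (t - z)))"
      using True by (intro mult_left_mono inv_sqrt_mult_le) auto
    also have "\<dots> = c / sqrt (z - s) + c / sqrt (t - z)"
      by (simp add: c_def distrib_left)
    finally show ?thesis
      using True c0 by (simp add: ennreal_plus[symmetric] del: ennreal_plus)
  qed (auto simp: Kmaj_def)
  have "(\<integral>\<^sup>+ z. ennreal (Kmaj t z * Kmaj z s) \<partial>lborel)
      \<le> (\<integral>\<^sup>+ z. indicator {s<..<t} z * ennreal (c / sqrt (z - s)) + indicator {s<..<t} z * ennreal (c / sqrt (t - z)) \<partial>lborel)"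
    by (intro nn_integral_mono pw)
  also have "\<dots> = ennreal (2 * c * sqrt (t - s)) + ennreal (2 * c * sqrt (t - s))"
    using c0 True by (simp add: nn_integral_add nn_integral_Ioo_inv_sqrt_left nn_integral_Ioo_inv_sqrt_right)
  also have "\<dots> = ennreal (4 * sqrt 2 * M\<^sup>2)"
    using c0 True by (simp add: ennreal_plus[symmetric] c_def del: ennreal_plus)
  also have "\<dots> \<le> ennreal (6 * M\<^sup>2)"
  proof (intro ennreal_leI mult_right_mono)
    have "sqrt 2 \<le> 3/2"
      by (rule real_le_lsqrt) (auto simp: power2_eq_square)
    then show "4 * sqrt 2 \<le> 6" by simp
  qed simp
  finally show ?thesis .
qed

lemma abs_H1_diff_le:
  assumes "0 < s" "s < t'" "t' < t"
  shows "\<bar>H1 \<xi> t s - H1 \<xi> t' s\<bar>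
    \<le> 2 * M * (t - t') * (1 / ((t - s) * sqrt (t - s))) + M ^ 3 * (t - t') * (1 / sqrt (t - s))
      + M * (1 / sqrt (t' - s) - 1 / sqrt (t - s))"
  using abs_heat_kernel_diff_le[of "t' - s" "t - s" "\<xi> t - \<xi> s" M "\<xi> t' - \<xi> s"]
    lipschitz[of t s] lipschitz[of t' s] lipschitz[of t t'] assms M_pos
  by (simp add: H1_def kernK_def)

definition H1_diff_majorant :: "real \<Rightarrow> real \<Rightarrow> real \<Rightarrow> ennreal" where
  "H1_diff_majorant t t' s =
     ennreal (2 * M * (t - t')) * (indicator {0<..<t'} s * ennreal (1 / ((t - s) * sqrt (t - s))))
     + ennreal (M ^ 3 * (t - t')) * (indicator {0<..<t} s * ennreal (1 / sqrt (t - s)))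
     + ennreal M * (indicator {0<..<t'} s * ennreal (1 / sqrt (t' - s) - 1 / sqrt (t - s)))
     + ennreal M * (indicator {t'<..<t} s * ennreal (1 / sqrt (t - s)))"

lemma ennreal_abs_H1_diff_le:
  assumes t': "0 \<le> t'" "t' < t" and s: "s \<noteq> t'"
  shows "ennreal \<bar>H1 \<xi> t s - H1 \<xi> t' s\<bar> \<le> H1_diff_majorant t t' s"
proof -
  consider "\<not> (0 < s \<and> s < t)" | "0 < s" "s < t'" | "t' < s" "s < t"
    using s by fastforce
  then show ?thesis
  proof cases
    case 1
    then have "H1 \<xi> t s = 0" "H1 \<xi> t' s = 0"
      using t' by (auto intro!: H1_eq_0)
    then show ?thesis
      by simp
  next
    case 2
    define A where "A = 1 / ((t - s) * sqrt (t - s))"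
    define B where "B = 1 / sqrt (t - s)"
    define C where "C = 1 / sqrt (t' - s) - 1 / sqrt (t - s)"
    have "0 \<le> A" "0 \<le> B" "0 \<le> C"
      using 2 t' by (auto simp: A_def B_def C_def frac_le)
    then have nonneg: "0 \<le> 2 * M * (t - t') * A" "0 \<le> M ^ 3 * (t - t') * B" "0 \<le> M * C"
      using t' M_pos by auto
    have "H1_diff_majorant t t' s
        = ennreal (2 * M * (t - t')) * ennreal A + ennreal (M ^ 3 * (t - t')) * ennreal B + ennreal M * ennreal C"
      using 2 t' by (simp add: H1_diff_majorant_def A_def B_def C_def)
    also have "\<dots> = ennreal (2 * M * (t - t') * A) + ennreal (M ^ 3 * (t - t') * B) + ennreal (M * C)"
      using \<open>0 \<le> A\<close> \<open>0 \<le> B\<close> \<open>0 \<le> C\<close> t' M_pos by (simp add: ennreal_mult)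
    also have "\<dots> = ennreal (2 * M * (t - t') * A + M ^ 3 * (t - t') * B + M * C)"
      using nonneg by (simp add: ennreal_plus)
    finally show ?thesis
      unfolding A_def B_def C_def using abs_H1_diff_le[OF 2 t'(2)] by (simp add: ennreal_leI)
  next
    case 3
    have "\<bar>H1 \<xi> t s - H1 \<xi> t' s\<bar> \<le> M * (1 / sqrt (t - s))"
      using abs_H1_le_Kmaj[of t s] 3 t' by (simp add: H1_eq_0 Kmaj_def)
    then have "ennreal \<bar>H1 \<xi> t s - H1 \<xi> t' s\<bar> \<le> ennreal M * (indicator {t'<..<t} s * ennreal (1 / sqrt (t - s)))"
      using 3 M_pos by (simp add: ennreal_mult[symmetric] ennreal_leI)
    also have "\<dots> \<le> H1_diff_majorant t t' s"
      by (simp add: H1_diff_majorant_def add_increasing)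
    finally show ?thesis .
  qed
qed

lemma nn_integral_H1_diff_majorant_le:
  assumes t': "0 \<le> t'" "t' < t" and tT: "t \<le> T"
  shows "(\<integral>\<^sup>+ s. H1_diff_majorant t t' s \<partial>lborel) \<le> ennreal ((8 * M + 2 * M ^ 3 * T) * sqrt (t - t'))"
proof -
  define h where "h = t - t'"
  have h: "0 < h" using t' by (simp add: h_def)
  have "(\<integral>\<^sup>+ s. H1_diff_majorant t t' s \<partial>lborel)
      = (\<integral>\<^sup>+ s. ennreal (2 * M * h) * (indicator {0<..<t'} s * ennreal (1 / ((t - s) * sqrt (t - s)))) \<partial>lborel)
      + (\<integral>\<^sup>+ s. ennreal (M ^ 3 * h) * (indicator {0<..<t} s * ennreal (1 / sqrt (t - s))) \<partial>lborel)
      + (\<integral>\<^sup>+ s. ennreal M * (indicator {0<..<t'} s * ennreal (1 / sqrt (t' - s) - 1 / sqrt (t - s))) \<partial>lborel)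
      + (\<integral>\<^sup>+ s. ennreal M * (indicator {t'<..<t} s * ennreal (1 / sqrt (t - s))) \<partial>lborel)"
    unfolding H1_diff_majorant_def h_def by (simp add: nn_integral_add)
  also have "\<dots> \<le> ennreal (2 * M * h * (2 / sqrt h)) + ennreal (M ^ 3 * h * (2 * sqrt t))
      + ennreal (M * (2 * sqrt h)) + ennreal (M * (2 * sqrt h))"
    using nn_integral_Ioo_inv_sqrt_cube_le[OF t'] nn_integral_Ioo_inv_sqrt_right[of 1 0 t]
      nn_integral_Ioo_inv_sqrt_diff_le[OF t'] nn_integral_Ioo_inv_sqrt_right[of 1 t' t] t' h M_pos
    by (intro add_mono nn_integral_cmult_le) (auto simp: h_def)
  also have "\<dots> = ennreal (2 * M * h * (2 / sqrt h) + M ^ 3 * h * (2 * sqrt t) + M * (2 * sqrt h) + M * (2 * sqrt h))"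
  proof -
    have "0 \<le> 2 * M * h * (2 / sqrt h)" "0 \<le> M ^ 3 * h * (2 * sqrt t)" "0 \<le> M * (2 * sqrt h)"
      using h M_pos t' by auto
    then show ?thesis
      by (simp only: ennreal_plus[symmetric] add_nonneg_nonneg)
  qed
  also have "\<dots> \<le> ennreal ((8 * M + 2 * M ^ 3 * T) * sqrt (t - t'))"
  proof (intro ennreal_leI)
    have "h * sqrt t \<le> T * sqrt h"
      using tT t' h by (intro mult_le_sqrt_mult) (auto simp: h_def)
    then have "M ^ 3 * h * (2 * sqrt t) \<le> 2 * M ^ 3 * T * sqrt h"
      using M_pos mult_left_mono[of "h * sqrt t" "T * sqrt h" "2 * M ^ 3"] by (simp add: mult_ac)
    moreover have "2 * M * h * (2 / sqrt h) = 4 * M * sqrt h"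
      using h by (simp add: field_simps)
    ultimately show "2 * M * h * (2 / sqrt h) + M ^ 3 * h * (2 * sqrt t) + M * (2 * sqrt h) + M * (2 * sqrt h)
        \<le> (8 * M + 2 * M ^ 3 * T) * sqrt (t - t')"
      by (simp add: h_def[symmetric] algebra_simps)
  qed
  finally show ?thesis .
qed

lemma nn_integral_abs_H1_diff_le:
  assumes "0 \<le> t'" "t' < t" "t \<le> T"
  shows "(\<integral>\<^sup>+ s. ennreal \<bar>H1 \<xi> t s - H1 \<xi> t' s\<bar> \<partial>lborel) \<le> ennreal ((8 * M + 2 * M ^ 3 * T) * sqrt (t - t'))"
proof -
  have "AE s in lborel. ennreal \<bar>H1 \<xi> t s - H1 \<xi> t' s\<bar> \<le> H1_diff_majorant t t' s"
    using AE_lborel_singleton[of t'] by eventually_elim (rule ennreal_abs_H1_diff_le[OF assms(1,2)])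
  then have "(\<integral>\<^sup>+ s. ennreal \<bar>H1 \<xi> t s - H1 \<xi> t' s\<bar> \<partial>lborel) \<le> (\<integral>\<^sup>+ s. H1_diff_majorant t t' s \<partial>lborel)"
    by (rule nn_integral_mono_AE)
  also have "\<dots> \<le> ennreal ((8 * M + 2 * M ^ 3 * T) * sqrt (t - t'))"
    by (rule nn_integral_H1_diff_majorant_le[OF assms])
  finally show ?thesis .
qed

end

text \<open>On z - s < a the weighted majorant has integral at most 2M\<surd>a; beyond a it is damped by
  e^{-\<lambda>a}. The two assumptions make each part at most 1/4.\<close>

locale weighted_kernel = lipschitz_kernel +
  fixes lam a :: real
  assumes lam_nonneg: "0 \<le> lam" and a_pos: "0 < a"
    and a_small: "2 * M * sqrt a \<le> 1/4" and lam_large: "M / sqrt a * exp (- lam * a) * T \<le> 1/4"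
begin

definition Kprofile :: "real \<Rightarrow> real" where
  "Kprofile u = (if 0 < u \<and> u < T then M / sqrt u * exp (- lam * u) else 0)"

lemma Kprofile_measurable[measurable]: "Kprofile \<in> borel_measurable borel"
  unfolding Kprofile_def by measurable

lemma ennreal_Kprofile_le:
  "ennreal (Kprofile u)
    \<le> indicator {0<..<a} u * ennreal (M / sqrt u) + ennreal (M / sqrt a * exp (- lam * a)) * indicator {0<..<T} u"
proof (cases "0 < u \<and> u < T")
  case True
  show ?thesis
  proof (cases "u < a")
    case True2: True
    have "M / sqrt u * exp (- lam * u) \<le> M / sqrt u * 1"
      using True lam_nonneg M_pos by (intro mult_left_mono) auto
    then have "ennreal (Kprofile u) \<le> indicator {0<..<a} u * ennreal (M / sqrt u)"
      using True True2 by (simp add: Kprofile_def ennreal_leI)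
    then show ?thesis
      by (rule order_trans) simp
  next
    case False2: False
    have "M / sqrt u \<le> M / sqrt a"
      using False2 a_pos M_pos by (intro divide_left_mono) auto
    moreover have "exp (- lam * u) \<le> exp (- lam * a)"
      using False2 lam_nonneg by (auto intro: mult_left_mono)
    ultimately have "M / sqrt u * exp (- lam * u) \<le> M / sqrt a * exp (- lam * a)"
      using M_pos a_pos by (intro mult_mono) auto
    then have "ennreal (Kprofile u) \<le> ennreal (M / sqrt a * exp (- lam * a)) * indicator {0<..<T} u"
      using True by (simp add: Kprofile_def ennreal_leI)
    then show ?thesis
      by (rule order_trans) simp
  qed
qed (auto simp: Kprofile_def)

lemma nn_integral_Kprofile_le: "(\<integral>\<^sup>+ u. ennreal (Kprofile u) \<partial>lborel) \<le> ennreal (1/2)"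
proof -
  define c where "c = M / sqrt a * exp (- lam * a)"
  have c0: "0 \<le> c" using M_pos a_pos by (simp add: c_def)
  have "(\<integral>\<^sup>+ u. ennreal (Kprofile u) \<partial>lborel)
      \<le> (\<integral>\<^sup>+ u. indicator {0<..<a} u * ennreal (M / sqrt u) + ennreal c * indicator {0<..<T} u \<partial>lborel)"
    unfolding c_def by (intro nn_integral_mono ennreal_Kprofile_le)
  also have "\<dots> = ennreal (2 * M * sqrt a) + ennreal (c * T)"
    using nn_integral_Ioo_inv_sqrt_left[of M 0 a] M_pos a_pos T_pos c0
    by (simp add: nn_integral_add nn_integral_cmult_indicator ennreal_mult)
  also have "\<dots> = ennreal (2 * M * sqrt a + c * T)"
    using M_pos a_pos T_pos c0 by (simp add: ennreal_plus)
  also have "\<dots> \<le> ennreal (1/2)"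
  proof (intro ennreal_leI)
    have "c * T \<le> 1/4"
      using lam_large by (simp add: c_def)
    then show "2 * M * sqrt a + c * T \<le> 1/2"
      using a_small by linarith
  qed
  finally show ?thesis .
qed

lemma Kmaj_weighted_le_Kprofile: "z \<le> T \<Longrightarrow> Kmaj z s * exp (- lam * (z - s)) \<le> Kprofile (z - s)"
  using M_pos by (auto simp: Kmaj_def Kprofile_def)

lemma nn_integral_Kmaj_weighted_in_z_le:
  "(\<integral>\<^sup>+ z. indicator {0..T} z * ennreal (Kmaj z s * exp (- lam * (z - s))) \<partial>lborel) \<le> ennreal (1/2)"
proof -
  have "(\<integral>\<^sup>+ z. indicator {0..T} z * ennreal (Kmaj z s * exp (- lam * (z - s))) \<partial>lborel)
      \<le> (\<integral>\<^sup>+ z. ennreal (Kprofile (z - s)) \<partial>lborel)"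
  proof (intro nn_integral_mono)
    show "indicator {0..T} z * ennreal (Kmaj z s * exp (- lam * (z - s))) \<le> ennreal (Kprofile (z - s))" for z
      using Kmaj_weighted_le_Kprofile[of z s] by (cases "z \<in> {0..T}") (auto intro: ennreal_leI)
  qed
  also have "\<dots> = (\<integral>\<^sup>+ u. ennreal (Kprofile u) \<partial>lborel)"
    using nn_integral_real_affine[of "\<lambda>u. ennreal (Kprofile u)" 1 "- s"] by simp
  finally show ?thesis
    using nn_integral_Kprofile_le by order
qed

lemma nn_integral_Kmaj_weighted_in_s_le:
  assumes "z \<le> T"
  shows "(\<integral>\<^sup>+ s. ennreal (Kmaj z s * exp (- lam * (z - s))) \<partial>lborel) \<le> ennreal (1/2)"
proof -
  have "(\<integral>\<^sup>+ s. ennreal (Kmaj z s * exp (- lam * (z - s))) \<partial>lborel)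
      \<le> (\<integral>\<^sup>+ s. ennreal (Kprofile (z - s)) \<partial>lborel)"
    using assms by (intro nn_integral_mono ennreal_leI Kmaj_weighted_le_Kprofile)
  also have "\<dots> = (\<integral>\<^sup>+ u. ennreal (Kprofile u) \<partial>lborel)"
    using nn_integral_real_affine[of "\<lambda>u. ennreal (Kprofile u)" "- 1" z] by simp
  finally show ?thesis
    using nn_integral_Kprofile_le by order
qed

lemma nn_integral_Kmaj_le:
  "(\<integral>\<^sup>+ z. indicator {0..T} z * ennreal (Kmaj z s) \<partial>lborel) \<le> ennreal (exp (lam * T) / 2)"
proof -
  have pw: "indicator {0..T} z * ennreal (Kmaj z s)
      \<le> ennreal (exp (lam * T)) * (indicator {0..T} z * ennreal (Kmaj z s * exp (- lam * (z - s))))" for z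
  proof (cases "z \<in> {0..T} \<and> 0 < s \<and> s < z")
    case True
    have "lam * z \<le> lam * T" "0 \<le> lam * s"
      using True lam_nonneg by (auto intro: mult_left_mono)
    then have "1 \<le> exp (lam * T) * exp (- lam * (z - s))"
      by (simp add: exp_add[symmetric] algebra_simps)
    then have "Kmaj z s * 1 \<le> Kmaj z s * (exp (lam * T) * exp (- lam * (z - s)))"
      using Kmaj_nonneg[of z s] by (intro mult_left_mono) auto
    then show ?thesis
      using True Kmaj_nonneg[of z s] by (simp add: ennreal_mult[symmetric] ennreal_leI mult_ac)
  qed (auto simp: Kmaj_def indicator_def)
  have "(\<integral>\<^sup>+ z. indicator {0..T} z * ennreal (Kmaj z s) \<partial>lborel)
      \<le> (\<integral>\<^sup>+ z. ennreal (exp (lam * T)) * (indicator {0..T} z * ennreal (Kmaj z s * exp (- lam * (z - s)))) \<partial>lborel)"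
    by (intro nn_integral_mono pw)
  also have "\<dots> = ennreal (exp (lam * T)) * (\<integral>\<^sup>+ z. indicator {0..T} z * ennreal (Kmaj z s * exp (- lam * (z - s))) \<partial>lborel)"
    by (intro nn_integral_cmult) auto
  also have "\<dots> \<le> ennreal (exp (lam * T)) * ennreal (1/2)"
    by (intro mult_left_mono nn_integral_Kmaj_weighted_in_z_le) auto
  also have "\<dots> = ennreal (exp (lam * T) / 2)"
    by (subst ennreal_mult[symmetric]) auto
  finally show ?thesis .
qed

lemma abs_set_integral_mult_H1_le:
  "ennreal \<bar>LINT z:{0..T}|lborel. g z * H1 \<xi> z s\<bar> \<le> (\<integral>\<^sup>+ z. indicator {0..T} z * ennreal (\<bar>g z\<bar> * Kmaj z s) \<partial>lborel)"
proof -
  have "ennreal \<bar>LINT z:{0..T}|lborel. g z * H1 \<xi> z s\<bar>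
      \<le> (\<integral>\<^sup>+ z. ennreal \<bar>indicator {0..T} z *\<^sub>R (g z * H1 \<xi> z s)\<bar> \<partial>lborel)"
    unfolding set_lebesgue_integral_def by (rule abs_integral_le_nn_integral)
  also have "\<dots> \<le> (\<integral>\<^sup>+ z. indicator {0..T} z * ennreal (\<bar>g z\<bar> * Kmaj z s) \<partial>lborel)"
  proof (intro nn_integral_mono)
    fix z
    have "\<bar>g z * H1 \<xi> z s\<bar> \<le> \<bar>g z\<bar> * Kmaj z s"
      by (simp add: abs_mult abs_H1_le_Kmaj mult_left_mono)
    then show "ennreal \<bar>indicator {0..T} z *\<^sub>R (g z * H1 \<xi> z s)\<bar> \<le> indicator {0..T} z * ennreal (\<bar>g z\<bar> * Kmaj z s)"
      by (auto simp: indicator_def intro: ennreal_leI)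
  qed
  finally show ?thesis .
qed

lemma abs_set_integral_mult_H1_weighted_le:
  assumes "\<And>z. \<bar>g z\<bar> \<le> c * exp (- lam * z)"
  shows "\<bar>LINT z:{0..T}|lborel. g z * H1 \<xi> z s\<bar> \<le> c * exp (- lam * s) / 2"
proof -
  have c0: "0 \<le> c"
    using assms[of 0] abs_ge_zero[of "g 0"] by simp
  have "ennreal \<bar>LINT z:{0..T}|lborel. g z * H1 \<xi> z s\<bar> \<le> (\<integral>\<^sup>+ z. indicator {0..T} z * ennreal (\<bar>g z\<bar> * Kmaj z s) \<partial>lborel)"
    by (rule abs_set_integral_mult_H1_le)
  also have "\<dots> \<le> (\<integral>\<^sup>+ z. ennreal (c * exp (- lam * s)) * (indicator {0..T} z * ennreal (Kmaj z s * exp (- lam * (z - s)))) \<partial>lborel)"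
  proof (intro nn_integral_mono)
    fix z
    have "\<bar>g z\<bar> * Kmaj z s \<le> c * exp (- lam * z) * Kmaj z s"
      by (intro mult_right_mono assms Kmaj_nonneg)
    also have "\<dots> = c * exp (- lam * s) * (Kmaj z s * exp (- lam * (z - s)))"
      by (simp add: exp_add[symmetric] algebra_simps)
    finally show "indicator {0..T} z * ennreal (\<bar>g z\<bar> * Kmaj z s)
        \<le> ennreal (c * exp (- lam * s)) * (indicator {0..T} z * ennreal (Kmaj z s * exp (- lam * (z - s))))"
      using c0 Kmaj_nonneg[of z s] by (auto simp: indicator_def ennreal_mult[symmetric] intro: ennreal_leI)
  qed
  also have "\<dots> = ennreal (c * exp (- lam * s)) * (\<integral>\<^sup>+ z. indicator {0..T} z * ennreal (Kmaj z s * exp (- lam * (z - s))) \<partial>lborel)"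
    by (intro nn_integral_cmult) auto
  also have "\<dots> \<le> ennreal (c * exp (- lam * s)) * ennreal (1/2)"
    by (intro mult_left_mono nn_integral_Kmaj_weighted_in_z_le) auto
  also have "\<dots> = ennreal (c * exp (- lam * s) / 2)"
    using c0 by (subst ennreal_mult[symmetric]) auto
  finally show ?thesis
    using c0 by (simp add: ennreal_le_iff)
qed

definition Hbound :: real where
  "Hbound = 6 * M\<^sup>2 * exp (lam * T)"

lemma Hbound_nonneg: "0 \<le> Hbound"
  by (simp add: Hbound_def)

lemma abs_Hsh_1_le:
  assumes "t \<le> T"
  shows "\<bar>Hsh \<xi> T (Suc 0) t s\<bar> \<le> Hbound * exp (- lam * s)"
proof (cases "0 < s \<and> s < t")
  case True
  have "ennreal \<bar>Hsh \<xi> T (Suc 0) t s\<bar> \<le> (\<integral>\<^sup>+ z. indicator {0..T} z * ennreal (\<bar>H1 \<xi> t z\<bar> * Kmaj z s) \<partial>lborel)"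
    using abs_set_integral_mult_H1_le[of "H1 \<xi> t" s] by (simp add: Hsh.simps)
  also have "\<dots> \<le> (\<integral>\<^sup>+ z. ennreal (Kmaj t z * Kmaj z s) \<partial>lborel)"
    by (intro nn_integral_mono)
       (auto simp: indicator_def intro!: ennreal_leI mult_right_mono abs_H1_le_Kmaj Kmaj_nonneg)
  also have "\<dots> \<le> ennreal (6 * M\<^sup>2)"
    by (rule nn_integral_Kmaj_Kmaj_le)
  finally have "\<bar>Hsh \<xi> T (Suc 0) t s\<bar> \<le> 6 * M\<^sup>2"
    by (simp add: ennreal_le_iff)
  also have "6 * M\<^sup>2 \<le> Hbound * exp (- lam * s)"
  proof -
    have "lam * s \<le> lam * T"
      using True assms lam_nonneg by (intro mult_left_mono) auto
    then have "1 \<le> exp (lam * T) * exp (- lam * s)"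
      by (simp add: exp_add[symmetric] algebra_simps)
    then have "6 * M\<^sup>2 * 1 \<le> 6 * M\<^sup>2 * (exp (lam * T) * exp (- lam * s))"
      by (intro mult_left_mono) auto
    then show ?thesis
      by (simp add: Hbound_def mult.assoc)
  qed
  finally show ?thesis .
qed (use Hsh_eq_0 Hbound_nonneg in simp)

lemma abs_Hsh_Suc_le:
  assumes "t \<le> T"
  shows "\<bar>Hsh \<xi> T (Suc n) t s\<bar> \<le> Hbound * (1/2) ^ n * exp (- lam * s)"
proof (induction n arbitrary: s)
  case 0
  then show ?case using abs_Hsh_1_le[OF assms] by simp
next
  case (Suc n)
  have "\<bar>Hsh \<xi> T (Suc (Suc n)) t s\<bar> \<le> Hbound * (1/2) ^ n * exp (- lam * s) / 2"
    unfolding Hsh.simps(2)[of _ _ "Suc n"] by (rule abs_set_integral_mult_H1_weighted_le[OF Suc.IH])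
  then show ?case by simp
qed

lemma abs_Hsh_Suc_le_geometric:
  assumes "t \<le> T"
  shows "\<bar>Hsh \<xi> T (Suc n) t s\<bar> \<le> Hbound * (1/2) ^ n"
proof (cases "0 < s")
  case True
  then have "exp (- lam * s) \<le> 1"
    using lam_nonneg by simp
  then have "Hbound * (1/2) ^ n * exp (- lam * s) \<le> Hbound * (1/2) ^ n * 1"
    using Hbound_nonneg by (intro mult_left_mono) auto
  then show ?thesis
    using abs_Hsh_Suc_le[OF assms, of n s] by simp
qed (use Hsh_eq_0 Hbound_nonneg in simp)

lemma summable_Hsh_Suc: "t \<le> T \<Longrightarrow> summable (\<lambda>n. Hsh \<xi> T (Suc n) t s)"
  by (rule summable_comparison_test'[of "\<lambda>n. Hbound * (1/2) ^ n"])
     (auto intro: abs_Hsh_Suc_le_geometric summable_mult summable_geometric)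

lemma abs_Gres_le:
  assumes "t \<le> T"
  shows "\<bar>Gres \<xi> T t s\<bar> \<le> 2 * Hbound"
proof -
  have summ: "summable (\<lambda>n. \<bar>Hsh \<xi> T (Suc n) t s\<bar>)"
    by (rule summable_comparison_test'[of "\<lambda>n. Hbound * (1/2) ^ n"])
       (auto intro: abs_Hsh_Suc_le_geometric[OF assms] summable_mult summable_geometric)
  have "\<bar>Gres \<xi> T t s\<bar> \<le> (\<Sum>n. \<bar>Hsh \<xi> T (Suc n) t s\<bar>)"
    unfolding Gres_def by (rule summable_rabs[OF summ])
  also have "\<dots> \<le> (\<Sum>n. Hbound * (1/2) ^ n)"
    by (intro suminf_le abs_Hsh_Suc_le_geometric assms summ summable_mult summable_geometric) simp
  also have "\<dots> = 2 * Hbound"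
    by (simp add: suminf_mult suminf_geometric[of "1/2::real"])
  finally show ?thesis .
qed

lemma Gres_measurable[measurable]: "t \<le> T \<Longrightarrow> Gres \<xi> T t \<in> borel_measurable lborel"
  unfolding Gres_def
  by (rule borel_measurable_LIMSEQ_real[OF summable_LIMSEQ[OF summable_Hsh_Suc]]) (auto intro!: borel_measurable_sum)

lemma integrable_H1_mult_H1: "integrable lborel (\<lambda>z. indicator {0..T} z *\<^sub>R (H1 \<xi> t z * H1 \<xi> z s))"
proof -
  have "(\<integral>\<^sup>+ z. ennreal (norm (indicator {0..T} z *\<^sub>R (H1 \<xi> t z * H1 \<xi> z s))) \<partial>lborel)
      \<le> (\<integral>\<^sup>+ z. ennreal (Kmaj t z * Kmaj z s) \<partial>lborel)"
  proof (intro nn_integral_mono)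
    fix z
    have "\<bar>H1 \<xi> t z * H1 \<xi> z s\<bar> \<le> Kmaj t z * Kmaj z s"
      unfolding abs_mult by (intro mult_mono abs_H1_le_Kmaj Kmaj_nonneg) auto
    then show "ennreal (norm (indicator {0..T} z *\<^sub>R (H1 \<xi> t z * H1 \<xi> z s))) \<le> ennreal (Kmaj t z * Kmaj z s)"
      using Kmaj_nonneg[of t z] Kmaj_nonneg[of z s] by (auto simp: indicator_def intro!: ennreal_leI)
  qed
  also have "\<dots> \<le> ennreal (6 * M\<^sup>2)"
    by (rule nn_integral_Kmaj_Kmaj_le)
  also have "\<dots> < \<infinity>"
    by simp
  finally show ?thesis
    by (simp add: integrable_iff_bounded)
qed

lemma integrable_mult_H1:
  assumes [measurable]: "g \<in> borel_measurable lborel" and g: "\<And>z. \<bar>g z\<bar> \<le> C"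
  shows "integrable lborel (\<lambda>z. indicator {0..T} z *\<^sub>R (g z * H1 \<xi> z s))"
proof -
  have C0: "0 \<le> C"
    using g[of 0] by linarith
  have "(\<integral>\<^sup>+ z. ennreal (norm (indicator {0..T} z *\<^sub>R (g z * H1 \<xi> z s))) \<partial>lborel)
      \<le> (\<integral>\<^sup>+ z. ennreal C * (indicator {0..T} z * ennreal (Kmaj z s)) \<partial>lborel)"
  proof (intro nn_integral_mono)
    fix z
    have "\<bar>g z * H1 \<xi> z s\<bar> \<le> C * Kmaj z s"
      unfolding abs_mult using g C0 by (intro mult_mono abs_H1_le_Kmaj) auto
    then show "ennreal (norm (indicator {0..T} z *\<^sub>R (g z * H1 \<xi> z s))) \<le> ennreal C * (indicator {0..T} z * ennreal (Kmaj z s))"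
      using C0 Kmaj_nonneg[of z s] by (auto simp: indicator_def ennreal_mult[symmetric] intro!: ennreal_leI)
  qed
  also have "\<dots> = ennreal C * (\<integral>\<^sup>+ z. indicator {0..T} z * ennreal (Kmaj z s) \<partial>lborel)"
    by (intro nn_integral_cmult) auto
  also have "\<dots> \<le> ennreal C * ennreal (exp (lam * T) / 2)"
    by (intro mult_left_mono nn_integral_Kmaj_le) auto
  also have "\<dots> < \<infinity>"
    by (simp add: ennreal_mult_less_top)
  finally show ?thesis
    by (simp add: integrable_iff_bounded)
qed

lemma integrable_Hsh_mult_H1:
  assumes "t \<le> T"
  shows "integrable lborel (\<lambda>z. indicator {0..T} z *\<^sub>R (Hsh \<xi> T n t z * H1 \<xi> z s))"
proof (cases n)
  case (Suc m)
  have "\<bar>Hsh \<xi> T (Suc m) t z\<bar> \<le> Hbound" for z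
    using abs_Hsh_Suc_le_geometric[OF assms, of m z] mult_left_le[of "(1/2) ^ m" Hbound] Hbound_nonneg
    by (simp add: power_le_one)
  then show ?thesis
    unfolding Suc by (intro integrable_mult_H1) auto
qed (use integrable_H1_mult_H1 in simp)

lemma abs_Hsh_Suc_diff_le:
  assumes "t \<le> T" "t' \<le> T"
  shows "ennreal \<bar>Hsh \<xi> T (Suc n) t s - Hsh \<xi> T (Suc n) t' s\<bar>
     \<le> (\<integral>\<^sup>+ z. indicator {0..T} z * ennreal (\<bar>Hsh \<xi> T n t z - Hsh \<xi> T n t' z\<bar> * Kmaj z s) \<partial>lborel)"
proof -
  have "Hsh \<xi> T (Suc n) t s - Hsh \<xi> T (Suc n) t' s
      = (\<integral>z. indicator {0..T} z *\<^sub>R (Hsh \<xi> T n t z * H1 \<xi> z s) - indicator {0..T} z *\<^sub>R (Hsh \<xi> T n t' z * H1 \<xi> z s) \<partial>lborel)"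
    unfolding Hsh.simps(2) set_lebesgue_integral_def
    by (rule Bochner_Integration.integral_diff[symmetric]) (intro integrable_Hsh_mult_H1 assms)+
  also have "\<dots> = (LINT z:{0..T}|lborel. (Hsh \<xi> T n t z - Hsh \<xi> T n t' z) * H1 \<xi> z s)"
    unfolding set_lebesgue_integral_def by (intro Bochner_Integration.integral_cong) (simp_all add: algebra_simps)
  finally show ?thesis
    using abs_set_integral_mult_H1_le by simp
qed

lemma nn_integral_Kmaj_weighted_contraction:
  assumes g[measurable]: "g \<in> borel_measurable lborel" and g0: "\<And>z. 0 \<le> g z"
  shows "(\<integral>\<^sup>+ s. (\<integral>\<^sup>+ z. indicator {0..T} z * ennreal (g z * Kmaj z s) \<partial>lborel) * ennreal (exp (lam * s)) \<partial>lborel)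
     \<le> ennreal (1/2) * (\<integral>\<^sup>+ z. ennreal (g z) * ennreal (exp (lam * z)) \<partial>lborel)"
proof -
  have "(\<integral>\<^sup>+ s. (\<integral>\<^sup>+ z. indicator {0..T} z * ennreal (g z * Kmaj z s) \<partial>lborel) * ennreal (exp (lam * s)) \<partial>lborel)
      = (\<integral>\<^sup>+ s. (\<integral>\<^sup>+ z. indicator {0..T} z * ennreal (g z * Kmaj z s) * ennreal (exp (lam * s)) \<partial>lborel) \<partial>lborel)"
    by (intro nn_integral_cong nn_integral_multc[symmetric]) measurable
  also have "\<dots> = (\<integral>\<^sup>+ z. (\<integral>\<^sup>+ s. indicator {0..T} z * ennreal (g z * Kmaj z s) * ennreal (exp (lam * s)) \<partial>lborel) \<partial>lborel)"
    by (rule lborel_pair.Fubini') measurable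
  also have "\<dots> \<le> (\<integral>\<^sup>+ z. ennreal (1/2) * (ennreal (g z) * ennreal (exp (lam * z))) \<partial>lborel)"
  proof (intro nn_integral_mono)
    fix z
    show "(\<integral>\<^sup>+ s. indicator {0..T} z * ennreal (g z * Kmaj z s) * ennreal (exp (lam * s)) \<partial>lborel)
        \<le> ennreal (1/2) * (ennreal (g z) * ennreal (exp (lam * z)))"
    proof (cases "z \<in> {0..T}")
      case True
      have "(\<integral>\<^sup>+ s. indicator {0..T} z * ennreal (g z * Kmaj z s) * ennreal (exp (lam * s)) \<partial>lborel)
          = (\<integral>\<^sup>+ s. ennreal (g z * exp (lam * z)) * ennreal (Kmaj z s * exp (- lam * (z - s))) \<partial>lborel)"
      proof (intro nn_integral_cong)
        fix s
        have "g z * Kmaj z s * exp (lam * s) = g z * exp (lam * z) * (Kmaj z s * exp (- lam * (z - s)))"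
          by (simp add: exp_add[symmetric] algebra_simps)
        then show "indicator {0..T} z * ennreal (g z * Kmaj z s) * ennreal (exp (lam * s))
            = ennreal (g z * exp (lam * z)) * ennreal (Kmaj z s * exp (- lam * (z - s)))"
          using True g0[of z] Kmaj_nonneg[of z s] by (simp add: ennreal_mult[symmetric])
      qed
      also have "\<dots> = ennreal (g z * exp (lam * z)) * (\<integral>\<^sup>+ s. ennreal (Kmaj z s * exp (- lam * (z - s))) \<partial>lborel)"
        by (rule nn_integral_cmult) measurable
      also have "\<dots> \<le> ennreal (g z * exp (lam * z)) * ennreal (1/2)"
        using True by (intro mult_left_mono nn_integral_Kmaj_weighted_in_s_le) auto
      also have "\<dots> = ennreal (1/2) * (ennreal (g z) * ennreal (exp (lam * z)))"
        using g0[of z] by (simp add: ennreal_mult mult_ac)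
      finally show ?thesis .
    qed simp
  qed
  also have "\<dots> = ennreal (1/2) * (\<integral>\<^sup>+ z. ennreal (g z) * ennreal (exp (lam * z)) \<partial>lborel)"
    by (rule nn_integral_cmult) measurable
  finally show ?thesis .
qed

definition Hdist :: "real \<Rightarrow> real \<Rightarrow> nat \<Rightarrow> ennreal" where
  "Hdist t t' n = (\<integral>\<^sup>+ s. ennreal \<bar>Hsh \<xi> T n t s - Hsh \<xi> T n t' s\<bar> * ennreal (exp (lam * s)) \<partial>lborel)"

lemma Hdist_Suc_le:
  assumes "t \<le> T" "t' \<le> T"
  shows "Hdist t t' (Suc n) \<le> ennreal (1/2) * Hdist t t' n"
proof -
  have "Hdist t t' (Suc n)
      \<le> (\<integral>\<^sup>+ s. (\<integral>\<^sup>+ z. indicator {0..T} z * ennreal (\<bar>Hsh \<xi> T n t z - Hsh \<xi> T n t' z\<bar> * Kmaj z s) \<partial>lborel)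
            * ennreal (exp (lam * s)) \<partial>lborel)"
    unfolding Hdist_def by (intro nn_integral_mono mult_right_mono abs_Hsh_Suc_diff_le assms) simp
  also have "\<dots> \<le> ennreal (1/2) * Hdist t t' n"
    unfolding Hdist_def by (rule nn_integral_Kmaj_weighted_contraction) auto
  finally show ?thesis .
qed

lemma Hdist_le_geometric:
  assumes "t \<le> T" "t' \<le> T"
  shows "Hdist t t' n \<le> ennreal ((1/2) ^ n) * Hdist t t' 0"
proof (induction n)
  case (Suc n)
  have "Hdist t t' (Suc n) \<le> ennreal (1/2) * Hdist t t' n"
    by (rule Hdist_Suc_le[OF assms])
  also have "\<dots> \<le> ennreal (1/2) * (ennreal ((1/2) ^ n) * Hdist t t' 0)"
    by (intro mult_left_mono Suc.IH) simp
  also have "\<dots> = (ennreal (1/2) * ennreal ((1/2) ^ n)) * Hdist t t' 0"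
    by (simp only: mult.assoc)
  also have "ennreal (1/2) * ennreal ((1/2) ^ n) = ennreal ((1/2::real) ^ Suc n)"
    by (subst ennreal_mult[symmetric]) auto
  finally show ?case .
qed simp

lemma Hdist_0_le:
  assumes t': "0 \<le> t'" "t' < t" and tT: "t \<le> T"
  shows "Hdist t t' 0 \<le> ennreal (exp (lam * T) * ((8 * M + 2 * M ^ 3 * T) * sqrt (t - t')))"
proof -
  have "Hdist t t' 0 \<le> (\<integral>\<^sup>+ s. ennreal (exp (lam * T)) * ennreal \<bar>H1 \<xi> t s - H1 \<xi> t' s\<bar> \<partial>lborel)"
    unfolding Hdist_def
  proof (intro nn_integral_mono)
    fix s
    show "ennreal \<bar>Hsh \<xi> T 0 t s - Hsh \<xi> T 0 t' s\<bar> * ennreal (exp (lam * s))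
        \<le> ennreal (exp (lam * T)) * ennreal \<bar>H1 \<xi> t s - H1 \<xi> t' s\<bar>"
    proof (cases "0 < s \<and> s < t")
      case True
      have "exp (lam * s) \<le> exp (lam * T)"
        using True tT lam_nonneg by (auto intro: mult_left_mono)
      then have "ennreal (exp (lam * s)) * ennreal \<bar>H1 \<xi> t s - H1 \<xi> t' s\<bar>
          \<le> ennreal (exp (lam * T)) * ennreal \<bar>H1 \<xi> t s - H1 \<xi> t' s\<bar>"
        by (intro mult_right_mono ennreal_leI) auto
      then show ?thesis
        by (simp add: ac_simps)
    next
      case False
      then have "H1 \<xi> t s = 0" "H1 \<xi> t' s = 0"
        using t' by (auto intro!: H1_eq_0)
      then show ?thesis by simp
    qed
  qed
  also have "\<dots> = ennreal (exp (lam * T)) * (\<integral>\<^sup>+ s. ennreal \<bar>H1 \<xi> t s - H1 \<xi> t' s\<bar> \<partial>lborel)"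
    by (rule nn_integral_cmult) measurable
  also have "\<dots> \<le> ennreal (exp (lam * T)) * ennreal ((8 * M + 2 * M ^ 3 * T) * sqrt (t - t'))"
    by (intro mult_left_mono nn_integral_abs_H1_diff_le assms) simp
  also have "\<dots> = ennreal (exp (lam * T) * ((8 * M + 2 * M ^ 3 * T) * sqrt (t - t')))"
    by (rule ennreal_mult[symmetric]) (use M_pos T_pos t' in auto)
  finally show ?thesis .
qed

lemma ennreal_abs_Gres_diff_le:
  assumes "t \<le> T" "t' \<le> T"
  shows "ennreal \<bar>Gres \<xi> T t s - Gres \<xi> T t' s\<bar> \<le> (\<Sum>n. ennreal \<bar>Hsh \<xi> T (Suc n) t s - Hsh \<xi> T (Suc n) t' s\<bar>)"
proof -
  let ?D = "\<lambda>n. \<bar>Hsh \<xi> T (Suc n) t s - Hsh \<xi> T (Suc n) t' s\<bar>"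
  have summ: "summable ?D"
  proof (rule summable_comparison_test'[of "\<lambda>n. 2 * Hbound * (1/2) ^ n"])
    show "norm (?D n) \<le> 2 * Hbound * (1/2) ^ n" for n
      using abs_Hsh_Suc_le_geometric[OF assms(1), of n s] abs_Hsh_Suc_le_geometric[OF assms(2), of n s] by simp
  qed (intro summable_mult summable_geometric, simp)
  have "Gres \<xi> T t s - Gres \<xi> T t' s = (\<Sum>n. Hsh \<xi> T (Suc n) t s - Hsh \<xi> T (Suc n) t' s)"
    unfolding Gres_def by (rule suminf_diff[OF summable_Hsh_Suc summable_Hsh_Suc]) (use assms in auto)
  also have "\<bar>\<dots>\<bar> \<le> (\<Sum>n. ?D n)"
    by (rule summable_rabs[OF summ])
  finally have "ennreal \<bar>Gres \<xi> T t s - Gres \<xi> T t' s\<bar> \<le> ennreal (\<Sum>n. ?D n)"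
    by (rule ennreal_leI)
  also have "\<dots> = (\<Sum>n. ennreal (?D n))"
    by (rule suminf_ennreal2[symmetric]) (auto intro: summ)
  finally show ?thesis .
qed

lemma nn_integral_abs_Gres_diff_le:
  assumes "t \<le> T" "t' \<le> T"
  shows "(\<integral>\<^sup>+ s. ennreal \<bar>Gres \<xi> T t s - Gres \<xi> T t' s\<bar> \<partial>lborel) \<le> Hdist t t' 0"
proof -
  let ?D = "\<lambda>n s. \<bar>Hsh \<xi> T (Suc n) t s - Hsh \<xi> T (Suc n) t' s\<bar>"
  have "(\<integral>\<^sup>+ s. ennreal (?D n s) \<partial>lborel) \<le> Hdist t t' (Suc n)" for n
    unfolding Hdist_def
  proof (intro nn_integral_mono)
    fix s
    show "ennreal (?D n s) \<le> ennreal (?D n s) * ennreal (exp (lam * s))"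
    proof (cases "0 < s")
      case True
      then have "ennreal (?D n s) * 1 \<le> ennreal (?D n s) * ennreal (exp (lam * s))"
        using lam_nonneg by (intro mult_left_mono ennreal_leI) auto
      then show ?thesis by simp
    qed (simp add: Hsh_eq_0)
  qed
  then have Dle: "(\<integral>\<^sup>+ s. ennreal (?D n s) \<partial>lborel) \<le> ennreal ((1/2) ^ Suc n) * Hdist t t' 0" for n
    using Hdist_le_geometric[OF assms] order_trans by blast
  have "(\<integral>\<^sup>+ s. ennreal \<bar>Gres \<xi> T t s - Gres \<xi> T t' s\<bar> \<partial>lborel) \<le> (\<integral>\<^sup>+ s. (\<Sum>n. ennreal (?D n s)) \<partial>lborel)"
    by (intro nn_integral_mono ennreal_abs_Gres_diff_le assms)
  also have "\<dots> = (\<Sum>n. \<integral>\<^sup>+ s. ennreal (?D n s) \<partial>lborel)"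
    by (rule nn_integral_suminf) measurable
  also have "\<dots> \<le> (\<Sum>n. ennreal ((1/2) ^ Suc n) * Hdist t t' 0)"
    by (intro suminf_le Dle summableI)
  also have "\<dots> = (\<Sum>n. ennreal ((1/2) ^ Suc n)) * Hdist t t' 0"
    by simp
  also have "(\<Sum>n. ennreal ((1/2::real) ^ Suc n)) = ennreal 1"
  proof (rule suminf_ennreal_eq)
    show "(\<lambda>n. (1/2::real) ^ Suc n) sums 1"
      using sums_mult[OF geometric_sums[of "1/2::real"], of "1/2"] by simp
  qed simp
  finally show ?thesis by simp
qed

lemma integrable_Gres_mult:
  assumes t: "t \<le> T" and f[measurable]: "f \<in> borel_measurable lborel" and F: "\<And>s. \<bar>f s\<bar> \<le> F"
  shows "integrable lborel (\<lambda>s. Gres \<xi> T t s * f s)"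
proof -
  have "(\<integral>\<^sup>+ s. ennreal (norm (Gres \<xi> T t s * f s)) \<partial>lborel) \<le> (\<integral>\<^sup>+ s. ennreal (2 * Hbound * F) * indicator {0..T} s \<partial>lborel)"
  proof (intro nn_integral_mono)
    fix s
    show "ennreal (norm (Gres \<xi> T t s * f s)) \<le> ennreal (2 * Hbound * F) * indicator {0..T} s"
    proof (cases "0 < s \<and> s < t")
      case True
      have "\<bar>Gres \<xi> T t s * f s\<bar> \<le> 2 * Hbound * F"
        unfolding abs_mult using abs_Gres_le[OF t] F Hbound_nonneg by (intro mult_mono) auto
      then show ?thesis
        using True t by (simp add: ennreal_leI)
    qed (simp add: Gres_eq_0)
  qed
  also have "\<dots> < \<infinity>"
    using T_pos by (simp add: nn_integral_cmult_indicator ennreal_mult_less_top)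
  finally show ?thesis
    using Gres_measurable[OF t] by (simp add: integrable_iff_bounded)
qed

lemma abs_resolvent_integral_diff_le:
  assumes f[measurable]: "f \<in> borel_measurable lborel" and F: "\<And>s. \<bar>f s\<bar> \<le> F"
    and t': "0 \<le> t'" "t' < t" and tT: "t \<le> T"
  shows "\<bar>(LINT s:{0..t}|lborel. Gres \<xi> T t s * f s) - (LINT s:{0..t'}|lborel. Gres \<xi> T t' s * f s)\<bar>
     \<le> F * exp (lam * T) * (8 * M + 2 * M ^ 3 * T) * sqrt (t - t')"
proof -
  have F0: "0 \<le> F" using F[of 0] by linarith
  have t'T: "t' \<le> T" using t' tT by simp
  note [measurable] = Gres_measurable[OF tT] Gres_measurable[OF t'T]
  have "ennreal \<bar>(LINT s:{0..t}|lborel. Gres \<xi> T t s * f s) - (LINT s:{0..t'}|lborel. Gres \<xi> T t' s * f s)\<bar>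
      = ennreal \<bar>\<integral>s. Gres \<xi> T t s * f s - Gres \<xi> T t' s * f s \<partial>lborel\<bar>"
    unfolding set_integral_Gres_mult_eq using integrable_Gres_mult[OF tT f F] integrable_Gres_mult[OF t'T f F] by simp
  also have "\<dots> \<le> (\<integral>\<^sup>+ s. ennreal \<bar>Gres \<xi> T t s * f s - Gres \<xi> T t' s * f s\<bar> \<partial>lborel)"
    by (rule abs_integral_le_nn_integral)
  also have "\<dots> \<le> (\<integral>\<^sup>+ s. ennreal F * ennreal \<bar>Gres \<xi> T t s - Gres \<xi> T t' s\<bar> \<partial>lborel)"
  proof (intro nn_integral_mono)
    fix s
    have "\<bar>Gres \<xi> T t s * f s - Gres \<xi> T t' s * f s\<bar> = \<bar>Gres \<xi> T t s - Gres \<xi> T t' s\<bar> * \<bar>f s\<bar>"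
      by (simp add: abs_mult[symmetric] algebra_simps)
    also have "\<dots> \<le> \<bar>Gres \<xi> T t s - Gres \<xi> T t' s\<bar> * F"
      by (intro mult_left_mono F) simp
    finally show "ennreal \<bar>Gres \<xi> T t s * f s - Gres \<xi> T t' s * f s\<bar> \<le> ennreal F * ennreal \<bar>Gres \<xi> T t s - Gres \<xi> T t' s\<bar>"
      using F0 by (simp add: ennreal_mult[symmetric] ennreal_leI mult.commute)
  qed
  also have "\<dots> = ennreal F * (\<integral>\<^sup>+ s. ennreal \<bar>Gres \<xi> T t s - Gres \<xi> T t' s\<bar> \<partial>lborel)"
    by (rule nn_integral_cmult) measurable
  also have "\<dots> \<le> ennreal F * Hdist t t' 0"
    by (intro mult_left_mono nn_integral_abs_Gres_diff_le tT t'T) simp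
  also have "\<dots> \<le> ennreal F * ennreal (exp (lam * T) * ((8 * M + 2 * M ^ 3 * T) * sqrt (t - t')))"
    by (intro mult_left_mono Hdist_0_le t' tT) simp
  also have "\<dots> = ennreal (F * exp (lam * T) * (8 * M + 2 * M ^ 3 * T) * sqrt (t - t'))"
    using F0 M_pos T_pos t' by (simp add: ennreal_mult[symmetric] mult.assoc)
  finally show ?thesis
    using F0 M_pos T_pos t' by (subst (asm) ennreal_le_iff) auto
qed

end

context lipschitz_kernel
begin

lemma weighted_kernel_exists: "\<exists>lam a. weighted_kernel \<xi> T M lam a"
proof (intro exI)
  define a where "a = 1 / (64 * M\<^sup>2)"
  define lam where "lam = \<bar>ln (32 * M\<^sup>2 * T)\<bar> / a"
  have a0: "0 < a" using M_pos by (simp add: a_def)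
  have sa: "sqrt a = 1 / (8 * M)"
    using M_pos by (simp add: a_def real_sqrt_divide real_sqrt_mult)
  have "exp (- lam * a) \<le> exp (- ln (32 * M\<^sup>2 * T))"
    using a0 by (simp add: lam_def)
  also have "\<dots> = 1 / (32 * M\<^sup>2 * T)"
    using M_pos T_pos by (simp add: exp_minus inverse_eq_divide)
  finally have "8 * M\<^sup>2 * T * exp (- lam * a) \<le> 8 * M\<^sup>2 * T * (1 / (32 * M\<^sup>2 * T))"
    using T_pos by (intro mult_left_mono) auto
  then have "M / sqrt a * exp (- lam * a) * T \<le> 1/4"
    using M_pos T_pos by (simp add: sa power2_eq_square mult_ac)
  then show "weighted_kernel \<xi> T M lam a"
    using a0 M_pos by unfold_locales (simp_all add: lam_def sa)
qed

lemma resolvent_integral_hoelder: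
  assumes "f \<in> borel_measurable lborel" "\<And>s. \<bar>f s\<bar> \<le> F"
  shows "hoelder_on (1/2) {0..T} (\<lambda>t. LINT s:{0..t}|lborel. Gres \<xi> T t s * f s)"
proof -
  obtain lam a where "weighted_kernel \<xi> T M lam a"
    using weighted_kernel_exists by blast
  then interpret weighted_kernel \<xi> T M lam a .
  show ?thesis
    by (rule hoelder_on_halfI) (auto intro: abs_resolvent_integral_diff_le[OF assms])
qed

end

theorem lemma3p15:
  fixes T \<beta> :: real and \<xi> f :: "real \<Rightarrow> real"
  assumes "T > 0"
    and "\<beta> > 1/2"
    and "C1_hoelder_on \<beta> {0..T} \<xi>"
    and "hoelder_on (1/2) {0..T} f"
  shows "hoelder_on (1/2) {0..T} (\<lambda>t. LINT s:{0..t}|lborel. Gres \<xi> T t s * f s)"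
proof -
  obtain M where M: "0 < M"
    and lip: "\<And>x y. x \<in> {0..T} \<Longrightarrow> y \<in> {0..T} \<Longrightarrow> \<bar>\<xi> x - \<xi> y\<bar> \<le> M * \<bar>x - y\<bar>"
    using C1_hoelder_on_lipschitz[OF assms(3)] assms(1,2) by auto
  define \<xi>c where "\<xi>c x = \<xi> (max 0 (min T x))" for x
  interpret lipschitz_kernel \<xi>c T M
    using assms(1) M lipschitz_extension_clamp[OF _ _ lip] by unfold_locales (auto simp: \<xi>c_def)
  obtain g F where g: "g \<in> borel_measurable borel" "\<And>x. \<bar>g x\<bar> \<le> F" "\<And>x. x \<in> {0..T} \<Longrightarrow> g x = f x"
    using hoelder_on_bounded_extension[OF assms(4)] assms(1) by auto
  have "hoelder_on (1/2) {0..T} (\<lambda>t. LINT s:{0..t}|lborel. Gres \<xi>c T t s * g s)"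
    using g by (intro resolvent_integral_hoelder) auto
  moreover have "(LINT s:{0..t}|lborel. Gres \<xi>c T t s * g s) = (LINT s:{0..t}|lborel. Gres \<xi> T t s * f s)"
    if "t \<in> {0..T}" for t
    using that g(3) Gres_cong[of T \<xi>c \<xi> t] by (intro set_lebesgue_integral_cong) (auto simp: \<xi>c_def)
  ultimately show ?thesis
    by (subst (asm) hoelder_on_cong) auto
qed

end
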